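(* Let $f$ be a stable update function. For every $0<\varepsilon_0\le 1/256$ there exists $\varepsilon>0$ such that, for every configuration $\mathcal U^{(t)}$ of $n$ opinions in $\mathbb S^{d-1}$ and every configuration $\mathcal U^{(t+1)}$ obtained from it by a single interaction: if $\mathcal U^{(t)}$ is $\varepsilon$-inactive, then $\mathcal U^{(t+1)}$ is $\varepsilon_0$-inactive, and the clusters of $\mathcal U^{(t)}$ (with parameter $\varepsilon$) coincide with the clusters of $\mathcal U^{(t+1)}$ (with parameter $\varepsilon_0$).
   Context: Opinions are unit vectors in $\mathbb R^d$; a configuration is an $n$-tuple, $A_{ij}=\langle\vec u_i,\vec u_j\rangle$. An interaction $(i,j)$, $i\ne j$, replaces $\vec u_i$ by $\vec w/\|\vec w\|$ with $\vec w=\vec u_i+f(A_{ij})\vec u_j$, leaving others unchanged. $f:[-1,1]\to\mathbb R$ is stable if continuous and $\operatorname{sign}f(A)=\operatorname{sign}A$ for all $A$. A configuration is $\varepsilon$-inactive if for all $i,j$, $|A_{ij}|\le\varepsilon$ or $|A_{ij}|\ge1-\varepsilon$. For an $\varepsilon$-inactive configuration, a nonempty $C\subseteq[n]$ is a cluster if $|A_{ij}|\ge1-\varepsilon$ for all $i,j\in C$ and $|A_{ij}|\le\varepsilon$ for all $i\in C$, $j\notin C$; for $\varepsilon\le1/256$ the clusters form a unique partition of $[n]$. *)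

theory Defs
  imports "HOL-Analysis.Analysis"
begin

text \<open>Opinions are unit vectors in R^d, modelled as elements of real^'d (d = CARD('d)).
A configuration of n opinions is a map U :: nat => real^'d, of which the entries
U 0, ..., U (n-1) are the opinions.\<close>

definition stable_update :: "(real \<Rightarrow> real) \<Rightarrow> bool" where
  "stable_update f \<longleftrightarrow> continuous_on {-1..1} f \<and> (\<forall>A\<in>{-1..1}. sgn (f A) = sgn A)"

definition configuration :: "nat \<Rightarrow> (nat \<Rightarrow> real^'d) \<Rightarrow> bool" where
  "configuration n U \<longleftrightarrow> (\<forall>i<n. norm (U i) = 1)"

definition interaction_vec :: "(real \<Rightarrow> real) \<Rightarrow> (nat \<Rightarrow> real^'d) \<Rightarrow> nat \<Rightarrow> nat \<Rightarrow> real^'d" where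
  "interaction_vec f U i j = U i + f (inner (U i) (U j)) *\<^sub>R U j"

definition interaction :: "(real \<Rightarrow> real) \<Rightarrow> nat \<Rightarrow> (nat \<Rightarrow> real^'d) \<Rightarrow> nat \<Rightarrow> nat \<Rightarrow> (nat \<Rightarrow> real^'d) \<Rightarrow> bool" where
  "interaction f n U i j U' \<longleftrightarrow> i < n \<and> j < n \<and> i \<noteq> j \<and> interaction_vec f U i j \<noteq> 0 \<and>
     U' = U(i := (1 / norm (interaction_vec f U i j)) *\<^sub>R interaction_vec f U i j)"

definition eps_inactive :: "real \<Rightarrow> nat \<Rightarrow> (nat \<Rightarrow> real^'d) \<Rightarrow> bool" where
  "eps_inactive \<epsilon> n U \<longleftrightarrow> (\<forall>i<n. \<forall>j<n. \<bar>inner (U i) (U j)\<bar> \<le> \<epsilon> \<or> \<bar>inner (U i) (U j)\<bar> \<ge> 1 - \<epsilon>)"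

definition is_cluster :: "real \<Rightarrow> nat \<Rightarrow> (nat \<Rightarrow> real^'d) \<Rightarrow> nat set \<Rightarrow> bool" where
  "is_cluster \<epsilon> n U C \<longleftrightarrow> C \<noteq> {} \<and> C \<subseteq> {..<n} \<and>
     (\<forall>i\<in>C. \<forall>j\<in>C. \<bar>inner (U i) (U j)\<bar> \<ge> 1 - \<epsilon>) \<and>
     (\<forall>i\<in>C. \<forall>j\<in>{..<n} - C. \<bar>inner (U i) (U j)\<bar> \<le> \<epsilon>)"

definition clusters :: "real \<Rightarrow> nat \<Rightarrow> (nat \<Rightarrow> real^'d) \<Rightarrow> nat set set" where
  "clusters \<epsilon> n U = {C. is_cluster \<epsilon> n U C}"

end

theory Submission
  imports Defs
begin

text \<open>An interaction moves only the opinion \<open>u = U i\<close>, and only a little when the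
configuration is \<open>\<epsilon>\<close>-inactive: if \<open>\<langle>u,v\<rangle>\<close> is small then so is \<open>f \<langle>u,v\<rangle>\<close>, by continuity
at \<open>0 = f 0\<close>, so \<open>u + f \<langle>u,v\<rangle> v\<close> is close to \<open>u\<close>; if \<open>|\<langle>u,v\<rangle>|\<close> is close to \<open>1\<close>, then \<open>u\<close> is close to
\<open>\<pm>v\<close> and, since \<open>f\<close> preserves signs, \<open>u + f \<langle>u,v\<rangle> v\<close> points almost in the direction \<open>\<pm>v\<close> as well.
A small move changes every inner product by little, and since an \<open>\<epsilon>\<close>-inactive configuration
has a wide gap between small and almost-\<open>\<pm>1\<close> inner products, both the dichotomy and the
resulting clusters survive with the coarser parameter \<open>\<epsilon>\<^sub>0\<close>.\<close>

lemma norm_sgn_minus_le: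
  fixes w v :: "'a::real_normed_vector"
  assumes "norm v = 1" "t \<ge> 1" "norm (w - t *\<^sub>R v) \<le> r" "w \<noteq> 0"
  shows "norm (sgn w - v) \<le> 2 * r"
proof -
  have "\<bar>norm w - t\<bar> \<le> r"
    using norm_triangle_ineq3[of w "t *\<^sub>R v"] assms by simp
  moreover have shrink: "x / t \<le> x" if "x \<ge> 0" for x
    using mult_left_mono[of 1 t x] assms(2) that by (simp add: divide_le_eq)
  ultimately have "\<bar>norm w - t\<bar> / t \<le> r"
    by (meson abs_ge_zero order_trans)
  moreover have "norm (w - t *\<^sub>R v) / t \<le> r"
    using shrink[OF norm_ge_zero] assms(3) order_trans by blast
  moreover have "sgn w - v = (inverse (norm w) - inverse t) *\<^sub>R w + inverse t *\<^sub>R (w - t *\<^sub>R v)"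
    using assms(2) by (simp add: sgn_div_norm algebra_simps)
  moreover have "norm ((inverse (norm w) - inverse t) *\<^sub>R w) = \<bar>norm w - t\<bar> / t"
    using assms(2,4) by (simp add: field_simps abs_minus_commute)
  ultimately show ?thesis
    using norm_triangle_ineq[of "(inverse (norm w) - inverse t) *\<^sub>R w"
        "inverse t *\<^sub>R (w - t *\<^sub>R v)"] assms(2) by (simp add: divide_inverse_commute)
qed

lemma abs_inner_diff_le:
  fixes a b a' b' :: "'a::real_inner"
  assumes "norm a \<le> 1" "norm b' \<le> 1"
  shows "\<bar>inner a' b' - inner a b\<bar> \<le> norm (a' - a) + norm (b' - b)"
proof -
  have "inner a' b' - inner a b = inner (a' - a) b' + inner a (b' - b)"
    by (simp add: inner_diff_left inner_diff_right)
  moreover have "\<bar>inner (a' - a) b'\<bar> \<le> norm (a' - a)"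
  proof -
    have "norm (a' - a) * norm b' \<le> norm (a' - a)"
      using assms(2) mult_left_mono[of "norm b'" 1 "norm (a' - a)"] by simp
    thus ?thesis using Cauchy_Schwarz_ineq2[of "a' - a" b'] by linarith
  qed
  moreover have "\<bar>inner a (b' - b)\<bar> \<le> norm (b' - b)"
  proof -
    have "norm a * norm (b' - b) \<le> norm (b' - b)"
      using assms(1) mult_right_mono[of "norm a" 1 "norm (b' - b)"] by simp
    thus ?thesis using Cauchy_Schwarz_ineq2[of a "b' - b"] by linarith
  qed
  ultimately show ?thesis by linarith
qed

lemma norm_diff_sgn_inner_square:
  fixes u v :: "'a::real_inner"
  assumes "norm u = 1" "norm v = 1" "inner u v \<noteq> 0"
  shows "(norm (u - sgn (inner u v) *\<^sub>R v))\<^sup>2 = 2 - 2 * \<bar>inner u v\<bar>"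
proof -
  have "inner u u = 1" "inner v v = 1"
    using assms(1,2) by (simp_all add: power2_norm_eq_inner[symmetric])
  moreover have "sgn (inner u v) * sgn (inner u v) = 1" "sgn (inner u v) * inner u v = \<bar>inner u v\<bar>"
    using assms(3) by (simp_all add: sgn_if)
  ultimately show ?thesis
    by (simp add: power2_norm_eq_inner inner_diff_left inner_diff_right inner_commute[of v u]
        algebra_simps)
qed

text \<open>Writing \<open>u + c v = (u - \<sigma> v) + (1 + |c|) \<sigma> v\<close> with \<open>\<sigma> = sgn c\<close> shows that the update is
a positive multiple of \<open>\<sigma> v\<close> up to an error \<open>|u - \<sigma> v|\<close>.\<close>
lemma norm_sgn_step_minus_le:
  fixes u v :: "'a::real_normed_vector"
  assumes "norm v = 1" "c \<noteq> 0" "u + c *\<^sub>R v \<noteq> 0"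
  shows "norm (sgn (u + c *\<^sub>R v) - u) \<le> 3 * norm (u - sgn c *\<^sub>R v)"
proof -
  let ?v = "sgn c *\<^sub>R v" and ?r = "norm (u - sgn c *\<^sub>R v)"
  have "norm ?v = 1" using assms(1,2) by (simp add: abs_sgn_eq)
  moreover have "norm (u + c *\<^sub>R v - (1 + \<bar>c\<bar>) *\<^sub>R ?v) \<le> ?r"
    by (simp add: algebra_simps scaleR_scaleR abs_mult_sgn)
  ultimately have "norm (sgn (u + c *\<^sub>R v) - ?v) \<le> 2 * ?r"
    using norm_sgn_minus_le[of ?v "1 + \<bar>c\<bar>" "u + c *\<^sub>R v" ?r] assms(3) by linarith
  thus ?thesis
    using norm_triangle_ineq4[of "sgn (u + c *\<^sub>R v) - ?v" "u - ?v"] by simp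
qed

lemma stable_update_step_close:
  assumes "stable_update f" "\<delta> > 0"
  shows "\<exists>\<epsilon>>0. \<forall>u v :: 'a::real_inner. norm u = 1 \<longrightarrow> norm v = 1 \<longrightarrow>
           (\<bar>inner u v\<bar> \<le> \<epsilon> \<or> \<bar>inner u v\<bar> \<ge> 1 - \<epsilon>) \<longrightarrow> u + f (inner u v) *\<^sub>R v \<noteq> 0 \<longrightarrow>
           norm (sgn (u + f (inner u v) *\<^sub>R v) - u) \<le> \<delta>"
proof -
  have sign: "\<And>A. A \<in> {-1..1} \<Longrightarrow> sgn (f A) = sgn A"
    using assms(1) by (simp add: stable_update_def)
  have "f 0 = 0" using sign[of 0] by (simp add: sgn_eq_0_iff)
  moreover have "continuous_on {-1..1} f" using assms(1) by (simp add: stable_update_def)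
  ultimately obtain e where e: "e > 0" "\<And>A. A \<in> {-1..1} \<Longrightarrow> \<bar>A\<bar> < e \<Longrightarrow> \<bar>f A\<bar> < \<delta> / 2"
    using assms(2) unfolding continuous_on_iff dist_real_def
    by (metis atLeastAtMost_iff diff_zero half_gt_zero minus_le_iff neg_le_0_iff_le zero_le_one)
  define \<epsilon> where "\<epsilon> = min (e / 2) (\<delta>\<^sup>2 / 18)"
  have "\<epsilon> > 0" "\<epsilon> < e" "\<epsilon> \<le> \<delta>\<^sup>2 / 18"
    using e(1) assms(2) by (simp_all add: \<epsilon>_def)
  have close: "norm (sgn (u + f (inner u v) *\<^sub>R v) - u) \<le> \<delta>"
    if u: "norm u = 1" and v: "norm v = 1" and dich: "\<bar>inner u v\<bar> \<le> \<epsilon> \<or> \<bar>inner u v\<bar> \<ge> 1 - \<epsilon>"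
      and w: "u + f (inner u v) *\<^sub>R v \<noteq> 0" for u v :: 'a
  proof -
    let ?A = "inner u v"
    have A: "?A \<in> {-1..1}"
      using Cauchy_Schwarz_ineq2[of u v] u v by auto
    show ?thesis
    proof (cases "\<bar>?A\<bar> \<le> \<epsilon>")
      case True
      hence "\<bar>f ?A\<bar> \<le> \<delta> / 2" using e(2)[OF A] \<open>\<epsilon> < e\<close> by fastforce
      thus ?thesis
        using norm_sgn_minus_le[of u 1 "u + f ?A *\<^sub>R v" "\<bar>f ?A\<bar>"] u v w by simp
    next
      case False
      with dich have near: "\<bar>?A\<bar> \<ge> 1 - \<epsilon>" by simp
      have "?A \<noteq> 0" using False \<open>\<epsilon> > 0\<close> by auto
      hence "f ?A \<noteq> 0" "sgn (f ?A) = sgn ?A" using sign[OF A] by (auto simp: sgn_eq_0_iff)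
      hence "norm (sgn (u + f ?A *\<^sub>R v) - u) \<le> 3 * norm (u - sgn ?A *\<^sub>R v)"
        using norm_sgn_step_minus_le[OF v _ w] by simp
      moreover have "(norm (u - sgn ?A *\<^sub>R v))\<^sup>2 \<le> (\<delta> / 3)\<^sup>2"
        using norm_diff_sgn_inner_square[OF u v \<open>?A \<noteq> 0\<close>] near \<open>\<epsilon> \<le> \<delta>\<^sup>2 / 18\<close>
        by (simp add: power_divide)
      hence "norm (u - sgn ?A *\<^sub>R v) \<le> \<delta> / 3"
        by (rule power2_le_imp_le) (use assms(2) in simp)
      ultimately show ?thesis by simp
    qed
  qed
  show ?thesis
    using \<open>\<epsilon> > 0\<close> by (intro exI[of _ \<epsilon>] conjI allI impI close)
qed

lemma dichotomy_perturb:
  fixes x y \<epsilon> \<epsilon>\<^sub>0 :: real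
  assumes "\<bar>x\<bar> \<le> \<epsilon> \<or> \<bar>x\<bar> \<ge> 1 - \<epsilon>" "\<bar>y - x\<bar> \<le> \<epsilon>\<^sub>0 / 2" "\<epsilon> \<le> \<epsilon>\<^sub>0 / 2" "\<epsilon>\<^sub>0 \<le> 1/4"
  shows "(\<bar>y\<bar> \<le> \<epsilon>\<^sub>0 \<longleftrightarrow> \<bar>x\<bar> \<le> \<epsilon>) \<and> (\<bar>y\<bar> \<ge> 1 - \<epsilon>\<^sub>0 \<longleftrightarrow> \<bar>x\<bar> \<ge> 1 - \<epsilon>)"
  using assms by linarith

lemma clusters_eq_if_same_classes:
  assumes "\<And>a b. a < n \<Longrightarrow> b < n \<Longrightarrow>
      (\<bar>inner (V a) (V b)\<bar> \<le> \<epsilon>' \<longleftrightarrow> \<bar>inner (U a) (U b)\<bar> \<le> \<epsilon>) \<and>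
      (\<bar>inner (V a) (V b)\<bar> \<ge> 1 - \<epsilon>' \<longleftrightarrow> \<bar>inner (U a) (U b)\<bar> \<ge> 1 - \<epsilon>)"
  shows "clusters \<epsilon> n U = clusters \<epsilon>' n V"
proof -
  have "is_cluster \<epsilon> n U C \<longleftrightarrow> is_cluster \<epsilon>' n V C" for C
    unfolding is_cluster_def using assms by (meson DiffD1 lessThan_iff subsetD)
  thus ?thesis by (simp add: clusters_def)
qed

lemma eps_inactive_perturb:
  fixes U V :: "nat \<Rightarrow> real^'d"
  assumes "eps_inactive \<epsilon> n U" "configuration n U" "configuration n V"
    and "\<forall>k<n. norm (V k - U k) \<le> \<epsilon>\<^sub>0 / 4" "\<epsilon> \<le> \<epsilon>\<^sub>0 / 2" "\<epsilon>\<^sub>0 \<le> 1/4"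
  shows "eps_inactive \<epsilon>\<^sub>0 n V \<and> clusters \<epsilon> n U = clusters \<epsilon>\<^sub>0 n V"
proof -
  have classes: "(\<bar>inner (V a) (V b)\<bar> \<le> \<epsilon>\<^sub>0 \<longleftrightarrow> \<bar>inner (U a) (U b)\<bar> \<le> \<epsilon>) \<and>
      (\<bar>inner (V a) (V b)\<bar> \<ge> 1 - \<epsilon>\<^sub>0 \<longleftrightarrow> \<bar>inner (U a) (U b)\<bar> \<ge> 1 - \<epsilon>)"
    if "a < n" "b < n" for a b
  proof (rule dichotomy_perturb)
    show "\<bar>inner (U a) (U b)\<bar> \<le> \<epsilon> \<or> \<bar>inner (U a) (U b)\<bar> \<ge> 1 - \<epsilon>"
      using assms(1) that by (simp add: eps_inactive_def)
    have "\<bar>inner (V a) (V b) - inner (U a) (U b)\<bar> \<le> norm (V a - U a) + norm (V b - U b)"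
      using abs_inner_diff_le[of "U a" "V b" "V a" "U b"] assms(2,3) that
      by (simp add: configuration_def)
    moreover have "norm (V a - U a) \<le> \<epsilon>\<^sub>0 / 4" "norm (V b - U b) \<le> \<epsilon>\<^sub>0 / 4"
      using assms(4) that by simp_all
    ultimately show "\<bar>inner (V a) (V b) - inner (U a) (U b)\<bar> \<le> \<epsilon>\<^sub>0 / 2" by linarith
  qed (use assms(5,6) in simp_all)
  have "eps_inactive \<epsilon>\<^sub>0 n V"
    unfolding eps_inactive_def
  proof (intro allI impI)
    fix a b assume "a < n" "b < n"
    with assms(1) classes[OF this] show "\<bar>inner (V a) (V b)\<bar> \<le> \<epsilon>\<^sub>0 \<or> \<bar>inner (V a) (V b)\<bar> \<ge> 1 - \<epsilon>\<^sub>0"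
      unfolding eps_inactive_def by blast
  qed
  moreover have "clusters \<epsilon> n U = clusters \<epsilon>\<^sub>0 n V"
    by (rule clusters_eq_if_same_classes) (rule classes)
  ultimately show ?thesis ..
qed

theorem mainTheorem18:
  fixes f :: "real \<Rightarrow> real" and \<epsilon>\<^sub>0 :: real
  assumes "stable_update f"
    and "0 < \<epsilon>\<^sub>0" and "\<epsilon>\<^sub>0 \<le> 1/256"
  shows "\<exists>\<epsilon>>0. \<forall>n (U :: nat \<Rightarrow> real^'d) U' i j.
           configuration n U \<longrightarrow> interaction f n U i j U' \<longrightarrow> eps_inactive \<epsilon> n U \<longrightarrow>
           eps_inactive \<epsilon>\<^sub>0 n U' \<and> clusters \<epsilon> n U = clusters \<epsilon>\<^sub>0 n U'"
proof -
  obtain \<epsilon>\<^sub>1 where "\<epsilon>\<^sub>1 > 0" and step: "\<forall>u v :: real^'d. norm u = 1 \<longrightarrow> norm v = 1 \<longrightarrow>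
      (\<bar>inner u v\<bar> \<le> \<epsilon>\<^sub>1 \<or> \<bar>inner u v\<bar> \<ge> 1 - \<epsilon>\<^sub>1) \<longrightarrow> u + f (inner u v) *\<^sub>R v \<noteq> 0 \<longrightarrow>
      norm (sgn (u + f (inner u v) *\<^sub>R v) - u) \<le> \<epsilon>\<^sub>0 / 4"
    using stable_update_step_close[OF assms(1), of "\<epsilon>\<^sub>0 / 4"] assms(2) by auto
  define \<epsilon> where "\<epsilon> = min \<epsilon>\<^sub>1 (\<epsilon>\<^sub>0 / 2)"
  have transfer: "eps_inactive \<epsilon>\<^sub>0 n U' \<and> clusters \<epsilon> n U = clusters \<epsilon>\<^sub>0 n U'"
    if "configuration n U" "interaction f n U i j U'" "eps_inactive \<epsilon> n U"
    for n and U U' :: "nat \<Rightarrow> real^'d" and i j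
  proof (rule eps_inactive_perturb[OF that(3)])
    let ?w = "interaction_vec f U i j"
    have ij: "i < n" "j < n" "?w \<noteq> 0" and U': "U' = U(i := sgn ?w)"
      using that(2) by (auto simp: interaction_def sgn_div_norm divide_inverse_commute)
    have "\<bar>inner (U i) (U j)\<bar> \<le> \<epsilon>\<^sub>1 \<or> \<bar>inner (U i) (U j)\<bar> \<ge> 1 - \<epsilon>\<^sub>1"
      using that(3) ij by (fastforce simp: eps_inactive_def \<epsilon>_def)
    moreover have "norm (U i) = 1" "norm (U j) = 1"
      using that(1) ij by (simp_all add: configuration_def)
    ultimately have "norm (sgn ?w - U i) \<le> \<epsilon>\<^sub>0 / 4"
      using step[rule_format, of "U i" "U j"] ij(3) by (simp add: interaction_vec_def)
    thus "\<forall>k<n. norm (U' k - U k) \<le> \<epsilon>\<^sub>0 / 4" using assms(2) by (simp add: U')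
    show "configuration n U" "configuration n U'"
      using that(1) ij by (auto simp: configuration_def U' norm_sgn)
  qed (use assms(3) in \<open>auto simp: \<epsilon>_def\<close>)
  show ?thesis
  proof (rule exI[of _ \<epsilon>], rule conjI)
    show "\<epsilon> > 0" using \<open>\<epsilon>\<^sub>1 > 0\<close> assms(2) by (simp add: \<epsilon>_def)
  qed (intro allI impI transfer)
qed

end
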